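(* In the setting of the context, let $c_p(\epsilon)$, $p\in\mathrm{JK}$, be arbitrary functions of $\epsilon$ independent of $\mathbf t$, and let $\mathcal F_\alpha(\mathbf t,\epsilon)=\sum_{p\in\mathrm{JK}}c_p(\epsilon)e^{-H_\epsilon(p)}$ (a generic solution of the classical equivariant cohomology relations). Then $\hat I_{X_{\mathbf t}}\cdot\mathcal F_\alpha(\mathbf t,\epsilon)$ is a formal solution of the equivariant Picard–Fuchs equations, i.e.\ $\mathrm{PF}^{\mathrm{eq}}_\gamma\,\hat I_{X_{\mathbf t}}\cdot\mathcal F_\alpha=0$ for all $\gamma\in\Lambda$.
   Context: $Q=(Q^a_i)$ integer $r\times N$ matrix with columns $Q_i$; chamber $\mathcal K\ni\mathbf t$ of regular values of $\mu^a(Z)=\sum_iQ^a_i|Z^i|^2$; $X_{\mathbf t}=\mu^{-1}(\mathbf t)/U(1)^r$ smooth. JK $=\{p=(i_1,\dots,i_r):\mathcal K\subseteq\mathrm{Cone}(Q_{i_1},\dots,Q_{i_r})\}$, $Q_p=(Q_{i_1}|\cdots|Q_{i_r})$ (invertible over $\mathbb{Z}$), $H_\epsilon(p)=\sum_{a,b}\epsilon_{i_b}(Q_p^{-1})^b_at^a$. $\Lambda=\mathcal K^\vee\cap\mathbb{Z}^r$, $\mathcal K^\vee=\{\mathbf d:\sum_ad_at^a\ge0\ \forall\mathbf t\in\mathcal K\}$. $\mathcal D_i=\epsilon_i+\sum_aQ^a_i\partial/\partial t^a$; Pochhammer $(z)_n=\Gamma(z+n)/\Gamma(z)$. Givental operator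 $\hat I_{X_{\mathbf t}}=\sum_{\mathbf d\in\Lambda}e^{-\lambda\sum_ad_at^a}\prod_{i=1}^N(\mathcal D_i/\lambda)_{-\sum_ad_aQ^a_i}$. Equivariant Picard–Fuchs operators $\mathrm{PF}^{\mathrm{eq}}_\gamma=\prod_{\{i:\sum_a\gamma_aQ^a_i>0\}}(\mathcal D_i/\lambda)_{\sum_a\gamma_aQ^a_i}-e^{-\lambda\sum_a\gamma_at^a}\prod_{\{i:\sum_a\gamma_aQ^a_i\le0\}}(\mathcal D_i/\lambda)_{-\sum_a\gamma_aQ^a_i}$. *)

theory Defs
  imports "HOL-Analysis.Analysis"
begin

text \<open>Conventions. The charge matrix Q is an integer r x N matrix of type int^'n^'r,
  with entry Q$a$i = Q^a_i (rows a :: 'r, columns i :: 'n). A tuple p = (i_1,...,i_r)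
  is a map p :: 'n^'r, b |-> i_b.\<close>

definition col :: "int^'n^'r \<Rightarrow> 'n \<Rightarrow> real^'r" where
  "col Q i = (\<chi> a. real_of_int (Q$a$i))"

definition moment :: "int^'n^'r \<Rightarrow> complex^'n \<Rightarrow> real^'r" where
  "moment Q Z = (\<chi> a. \<Sum>i\<in>UNIV. real_of_int (Q$a$i) * (cmod (Z$i))^2)"

definition regvals :: "int^'n^'r \<Rightarrow> (real^'r) set" where
  "regvals Q = {t. t \<in> range (moment Q) \<and>
     (\<forall>Z. moment Q Z = t \<longrightarrow> (\<exists>D. (moment Q has_derivative D) (at Z) \<and> surj D))}"

definition is_chamber :: "int^'n^'r \<Rightarrow> (real^'r) set \<Rightarrow> bool" where
  "is_chamber Q K \<longleftrightarrow> (\<exists>t\<in>regvals Q. K = connected_component_set (regvals Q) t)"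

definition Qp :: "int^'n^'r \<Rightarrow> 'n^'r \<Rightarrow> int^'r^'r" where
  "Qp Q p = (\<chi> a b. Q$a$(p$b))"

definition cone_p :: "int^'n^'r \<Rightarrow> 'n^'r \<Rightarrow> (real^'r) set" where
  "cone_p Q p = {x. \<exists>c::real^'r. (\<forall>b. c$b \<ge> 0) \<and> x = (\<Sum>b\<in>UNIV. c$b *\<^sub>R col Q (p$b))}"

definition JK :: "int^'n^'r \<Rightarrow> (real^'r) set \<Rightarrow> ('n^'r) set" where
  "JK Q K = {p. K \<subseteq> cone_p Q p}"

definition Lambda :: "(real^'r) set \<Rightarrow> (int^'r) set" where
  "Lambda K = {d. \<forall>t\<in>K. (\<Sum>a\<in>UNIV. real_of_int (d$a) * t$a) \<ge> 0}"

definition Hcoef :: "int^'n^'r \<Rightarrow> complex^'n \<Rightarrow> 'n^'r \<Rightarrow> complex^'r" where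
  "Hcoef Q \<epsilon> p = (\<chi> a. \<Sum>b\<in>UNIV. \<epsilon>$(p$b) * of_int ((matrix_inv (Qp Q p))$b$a))"

definition H_eps :: "int^'n^'r \<Rightarrow> complex^'n \<Rightarrow> 'n^'r \<Rightarrow> real^'r \<Rightarrow> complex" where
  "H_eps Q \<epsilon> p t = (\<Sum>a\<in>UNIV. Hcoef Q \<epsilon> p $ a * of_real (t$a))"

text \<open>Formal exponential series in t: a function f :: complex^'r => complex stands for
  the formal sum  sum_kappa f(kappa) * exp(sum_a kappa_a t^a).  fexp kappa is exp(kappa . t).\<close>
type_synonym 'r fseries = "complex^'r \<Rightarrow> complex"

definition fexp :: "complex^'r \<Rightarrow> 'r fseries" where
  "fexp \<kappa> = (\<lambda>\<kappa>'. if \<kappa>' = \<kappa> then 1 else 0)"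

text \<open>Eigenvalue of D_i = eps_i + sum_a Q^a_i d/dt^a on exp(kappa . t).\<close>
definition Deig :: "int^'n^'r \<Rightarrow> complex^'n \<Rightarrow> 'n \<Rightarrow> complex^'r \<Rightarrow> complex" where
  "Deig Q \<epsilon> i \<kappa> = \<epsilon>$i + (\<Sum>a\<in>UNIV. of_int (Q$a$i) * \<kappa>$a)"

definition D_op :: "int^'n^'r \<Rightarrow> complex^'n \<Rightarrow> 'n \<Rightarrow> 'r fseries \<Rightarrow> 'r fseries" where
  "D_op Q \<epsilon> i f = (\<lambda>\<kappa>. Deig Q \<epsilon> i \<kappa> * f \<kappa>)"

text \<open>Pochhammer (z)_n = Gamma(z+n)/Gamma(z) for integer n, as a rational function of z:
  z(z+1)...(z+n-1) for n >= 0 and 1/((z-1)(z-2)...(z+n)) for n < 0.\<close>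
definition poch_int :: "complex \<Rightarrow> int \<Rightarrow> complex" where
  "poch_int z n = (if n \<ge> 0 then pochhammer z (nat n)
                   else 1 / (\<Prod>k\<in>{1..nat (-n)}. z - of_nat k))"

text \<open>The operator product prod_{i in S} (D_i/lambda)_{n_i} (the factors commute and act
  diagonally on exponentials).\<close>
definition poch_prod_op :: "int^'n^'r \<Rightarrow> complex^'n \<Rightarrow> complex \<Rightarrow> 'n set \<Rightarrow> ('n \<Rightarrow> int)
    \<Rightarrow> 'r fseries \<Rightarrow> 'r fseries" where
  "poch_prod_op Q \<epsilon> lam S n f = (\<lambda>\<kappa>. (\<Prod>i\<in>S. poch_int (Deig Q \<epsilon> i \<kappa> / lam) (n i)) * f \<kappa>)"

text \<open>Multiplication by exp(- lambda sum_a d_a t^a).\<close>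
definition expmul :: "complex \<Rightarrow> int^'r \<Rightarrow> 'r fseries \<Rightarrow> 'r fseries" where
  "expmul lam d f = (\<lambda>\<kappa>. f (\<kappa> + (\<chi> a. lam * of_int (d$a))))"

definition dQ :: "int^'n^'r \<Rightarrow> int^'r \<Rightarrow> 'n \<Rightarrow> int" where
  "dQ Q d i = (\<Sum>a\<in>UNIV. d$a * Q$a$i)"

definition Ihat :: "int^'n^'r \<Rightarrow> (real^'r) set \<Rightarrow> complex^'n \<Rightarrow> complex
    \<Rightarrow> 'r fseries \<Rightarrow> 'r fseries" where
  "Ihat Q K \<epsilon> lam f = (\<lambda>\<kappa>. \<Sum>\<^sub>\<infinity>d\<in>Lambda K.
      expmul lam d (poch_prod_op Q \<epsilon> lam UNIV (\<lambda>i. - dQ Q d i) f) \<kappa>)"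

definition PF :: "int^'n^'r \<Rightarrow> complex^'n \<Rightarrow> complex \<Rightarrow> int^'r \<Rightarrow> 'r fseries \<Rightarrow> 'r fseries" where
  "PF Q \<epsilon> lam \<gamma> f = (\<lambda>\<kappa>.
      poch_prod_op Q \<epsilon> lam {i. dQ Q \<gamma> i > 0} (\<lambda>i. dQ Q \<gamma> i) f \<kappa>
    - expmul lam \<gamma> (poch_prod_op Q \<epsilon> lam {i. dQ Q \<gamma> i \<le> 0} (\<lambda>i. - dQ Q \<gamma> i) f) \<kappa>)"

definition F_alpha :: "int^'n^'r \<Rightarrow> (real^'r) set \<Rightarrow> complex^'n
    \<Rightarrow> ('n^'r \<Rightarrow> complex^'n \<Rightarrow> complex) \<Rightarrow> 'r fseries" where
  "F_alpha Q K \<epsilon> c = (\<lambda>\<kappa>. \<Sum>p\<in>JK Q K. c p \<epsilon> * fexp (- Hcoef Q \<epsilon> p) \<kappa>)"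

text \<open>Genericity of the equivariant parameters (so that all Pochhammer symbols with negative
  index occurring are finite): for p in JK and i not among i_1..i_r, the eigenvalue of
  D_i/lambda on exp(-H_eps(p)) is not an integer.\<close>
definition generic_eps :: "int^'n^'r \<Rightarrow> (real^'r) set \<Rightarrow> complex^'n \<Rightarrow> complex \<Rightarrow> bool" where
  "generic_eps Q K \<epsilon> lam \<longleftrightarrow> (\<forall>p\<in>JK Q K. \<forall>i. (\<forall>b. p$b \<noteq> i) \<longrightarrow>
      Deig Q \<epsilon> i (- Hcoef Q \<epsilon> p) / lam \<notin> \<int>)"

end

theory Submission
  imports Defs
begin

text \<open>Both \<open>Ihat\<close> and \<open>PF\<^sub>\<gamma>\<close> act on a formal exponential \<open>exp(\<kappa>\<cdot>t)\<close> by shifting \<open>\<kappa>\<close>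
  along the lattice \<open>\<lambda>\<int>\<^sup>r\<close> and multiplying by products of Pochhammer symbols, so by linearity
  it suffices to treat one summand \<open>exp(-H\<^sub>\<epsilon>(p))\<close>, \<open>p \<in> JK\<close>. Let \<open>y\<^sub>i\<close> be the eigenvalue of
  \<open>D\<^sub>i/\<lambda>\<close> on it: \<open>y\<^sub>i = 0\<close> for the columns \<open>i = i\<^sub>b\<close> of \<open>p\<close>, and \<open>y\<^sub>i \<notin> \<int>\<close> otherwise by
  genericity, so no poles occur. At the exponent \<open>-H\<^sub>\<epsilon>(p) - \<lambda>e\<close> both terms of
  \<open>PF\<^sub>\<gamma> Ihat exp(-H\<^sub>\<epsilon>(p))\<close> reduce, by \<open>(y)\<^sub>k (y+k)\<^sub>j = (y)\<^bsub>k+j\<^esub>\<close>, to the same product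
  \<open>\<Prod>\<^sub>i (y\<^sub>i)\<^bsub>max(\<gamma>\<cdot>Q\<^sub>i, 0) - e\<cdot>Q\<^sub>i\<^esub>\<close>, except that the first is present only for \<open>e \<in> \<Lambda>\<close> and the
  second only for \<open>e - \<gamma> \<in> \<Lambda>\<close>. But if \<open>e \<notin> \<Lambda>\<close>, then \<open>e\<cdot>Q\<^bsub>i_b\<^esub> < 0\<close> for some \<open>b\<close>, because the
  chamber lies in the cone spanned by the \<open>Q\<^bsub>i_b\<^esub>\<close>, and the product contains the factor
  \<open>(0)\<^sub>n = 0\<close> with \<open>n > 0\<close>; likewise for \<open>e - \<gamma>\<close>.\<close>

lemma poch_int_of_nat [simp]: "poch_int z (int k) = pochhammer z k"
  by (simp add: poch_int_def)

lemma poch_int_minus_of_nat: "poch_int z (- int k) = 1 / pochhammer (z - of_nat k) k"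
proof (cases "k = 0")
  case False
  have "pochhammer (z - of_nat k) k = (\<Prod>l\<in>{1..k}. z - of_nat l)"
    by (auto simp: pochhammer_prod_rev intro!: prod.cong)
  then show ?thesis
    using False by (simp add: poch_int_def)
qed (simp add: poch_int_def)

lemma pochhammer_minus_of_nat_neq_0:
  fixes z :: "'a::field_char_0"
  assumes "\<And>l. 0 < l \<Longrightarrow> z \<noteq> of_nat l"
  shows "pochhammer (z - of_nat k) k \<noteq> 0"
proof
  assume "pochhammer (z - of_nat k) k = 0"
  then obtain m where "m < k" "z - of_nat k = - of_nat m"
    by (auto simp: pochhammer_eq_0_iff)
  then have "z = of_nat (k - m)" "0 < k - m"
    by (auto simp: algebra_simps)
  with assms show False by blast
qed

lemma poch_int_add:
  assumes no_pole: "\<And>l. 0 < l \<Longrightarrow> z \<noteq> of_nat l" and "0 \<le> j"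
  shows "poch_int z k * poch_int (z + of_int k) j = poch_int z (k + j)"
proof -
  obtain J where j: "j = int J"
    using \<open>0 \<le> j\<close> nonneg_int_cases by blast
  show ?thesis
  proof (cases "0 \<le> k")
    case True
    then obtain K where "k = int K"
      using nonneg_int_cases by blast
    then show ?thesis
      using j by (simp flip: of_nat_add add: pochhammer_product')
  next
    case False
    define K where "K = nat (- k)"
    define w where "w = z - of_nat K"
    have k: "k = - int K" and zk: "z + of_int k = w"
      using False by (simp_all add: K_def w_def)
    have nz: "pochhammer w K \<noteq> 0"
      unfolding w_def using no_pole by (rule pochhammer_minus_of_nat_neq_0)
    show ?thesis
    proof (cases "K \<le> J")
      case True
      then obtain M where M: "J = K + M"
        using le_Suc_ex by blast
      have "pochhammer w J = pochhammer w K * pochhammer z M"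
        by (simp add: M pochhammer_product' w_def)
      moreover have "k + j = int M"
        using k j M by simp
      ultimately show ?thesis
        using nz by (simp add: k zk j poch_int_minus_of_nat flip: w_def)
    next
      case False
      then obtain M where M: "K = J + M"
        using le_Suc_ex less_imp_le_nat by (metis not_le)
      have "pochhammer w K = pochhammer w J * pochhammer (z - of_nat M) M"
        by (simp add: M pochhammer_product' w_def algebra_simps)
      moreover have "k + j = - int M"
        using k j M by simp
      ultimately show ?thesis
        using nz by (simp add: k zk j poch_int_minus_of_nat flip: w_def)
    qed
  qed
qed

text \<open>Both sides equal \<open>poch_int y (max g 0 - n)\<close>.\<close>
lemma poch_int_PF_factor:
  assumes no_pole: "\<And>l. 0 < l \<Longrightarrow> y \<noteq> of_nat l"
  shows "(if 0 < g then poch_int (y - of_int n) g else 1) * poch_int y (- n)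
       = (if g \<le> 0 then poch_int (y - of_int (n - g)) (- g) else 1) * poch_int y (g - n)"
proof (cases "0 < g")
  case True
  then show ?thesis
    using poch_int_add[OF no_pole, of g "- n"] by (simp add: mult.commute)
next
  case False
  have "y + of_int (g - n) = y - of_int (n - g)"
    by simp
  then show ?thesis
    using False poch_int_add[OF no_pole, of "- g" "g - n"] by (simp only: mult.commute) simp
qed

lemma prod_poch_int_PF:
  fixes y :: "'i::finite \<Rightarrow> complex" and n g :: "'i \<Rightarrow> int"
  assumes "\<And>i l. 0 < l \<Longrightarrow> y i \<noteq> of_nat l"
  shows "(\<Prod>i | 0 < g i. poch_int (y i - of_int (n i)) (g i)) * (\<Prod>i\<in>UNIV. poch_int (y i) (- n i))
       = (\<Prod>i | g i \<le> 0. poch_int (y i - of_int (n i - g i)) (- g i)) * (\<Prod>i\<in>UNIV. poch_int (y i) (g i - n i))"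
    (is "?lhs = ?rhs")
proof -
  have "?lhs = (\<Prod>i\<in>UNIV. (if 0 < g i then poch_int (y i - of_int (n i)) (g i) else 1) * poch_int (y i) (- n i))"
    by (simp add: prod.distrib prod.inter_filter[symmetric])
  also have "\<dots> = (\<Prod>i\<in>UNIV. (if g i \<le> 0 then poch_int (y i - of_int (n i - g i)) (- g i) else 1) * poch_int (y i) (g i - n i))"
    using poch_int_PF_factor[OF assms] by simp
  also have "\<dots> = ?rhs"
    by (simp add: prod.distrib prod.inter_filter[symmetric])
  finally show ?thesis .
qed

lemma prod_poch_int_eq_0:
  fixes y :: "'i::finite \<Rightarrow> complex"
  assumes "y j = 0" and "0 < n j"
  shows "(\<Prod>i\<in>UNIV. poch_int (y i) (n i)) = 0"
proof -
  have "poch_int (y j) (n j) = 0"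
    using assms by (simp add: poch_int_def pochhammer_0_left)
  then show ?thesis
    by (intro prod_zero) auto
qed

lemma has_sum_single_support:
  fixes f :: "'a \<Rightarrow> 'b::{topological_comm_monoid_add, t2_space}"
  assumes "\<And>x. x \<in> A \<Longrightarrow> x \<noteq> a \<Longrightarrow> f x = 0"
  shows "(f has_sum (if a \<in> A then f a else 0)) A"
  by (rule has_sum_finite_neutralI[of "A \<inter> {a}"]) (use assms in auto)

lemma infsum_sum:
  fixes f :: "'i \<Rightarrow> 'a \<Rightarrow> 'b::{topological_comm_monoid_add, t2_space}"
  assumes "finite I" and "\<And>i. i \<in> I \<Longrightarrow> f i summable_on A"
  shows "(\<Sum>\<^sub>\<infinity>x\<in>A. \<Sum>i\<in>I. f i x) = (\<Sum>i\<in>I. \<Sum>\<^sub>\<infinity>x\<in>A. f i x)"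
proof -
  have "((\<lambda>x. \<Sum>i\<in>I. f i x) has_sum (\<Sum>i\<in>I. \<Sum>\<^sub>\<infinity>x\<in>A. f i x)) A"
    using assms
  proof (induction I rule: finite_induct)
    case (insert i I)
    then show ?case
      by (simp add: has_sum_add)
  qed simp
  then show ?thesis
    by (rule infsumI)
qed

definition scaled_vec :: "complex \<Rightarrow> int^'r \<Rightarrow> complex^'r" where
  "scaled_vec lam d = (\<chi> a. lam * of_int (d$a))"

lemma scaled_vec_add: "scaled_vec lam (d + e) = scaled_vec lam d + scaled_vec lam e"
  by (simp add: scaled_vec_def vec_eq_iff algebra_simps)

lemma scaled_vec_diff: "scaled_vec lam (d - e) = scaled_vec lam d - scaled_vec lam e"
  by (simp add: scaled_vec_def vec_eq_iff algebra_simps)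

lemma scaled_vec_inj: "lam \<noteq> 0 \<Longrightarrow> scaled_vec lam d = scaled_vec lam e \<Longrightarrow> d = e"
  by (simp add: scaled_vec_def vec_eq_iff)

lemma expmul_apply: "expmul lam d f \<kappa> = f (\<kappa> + scaled_vec lam d)"
  by (simp add: expmul_def scaled_vec_def)

lemma dQ_diff: "dQ Q (d - e) i = dQ Q d i - dQ Q e i"
  by (simp add: dQ_def sum_subtractf algebra_simps)

lemma Deig_diff_scaled_vec:
  "Deig Q \<epsilon> i (\<kappa> - scaled_vec lam d) = Deig Q \<epsilon> i \<kappa> - lam * of_int (dQ Q d i)"
  by (simp add: Deig_def scaled_vec_def dQ_def sum_subtractf sum_distrib_left algebra_simps)

lemma Ihat_apply:
  "Ihat Q K \<epsilon> lam f \<kappa> = (\<Sum>\<^sub>\<infinity>d\<in>Lambda K.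
     (\<Prod>i\<in>UNIV. poch_int (Deig Q \<epsilon> i (\<kappa> + scaled_vec lam d) / lam) (- dQ Q d i)) * f (\<kappa> + scaled_vec lam d))"
  unfolding Ihat_def poch_prod_op_def expmul_apply ..

lemma Ihat_sum:
  assumes "finite P"
    and "\<And>p. p \<in> P \<Longrightarrow> (\<lambda>d. (\<Prod>i\<in>UNIV. poch_int (Deig Q \<epsilon> i (\<kappa> + scaled_vec lam d) / lam) (- dQ Q d i))
           * f p (\<kappa> + scaled_vec lam d)) summable_on Lambda K"
  shows "Ihat Q K \<epsilon> lam (\<lambda>\<mu>. \<Sum>p\<in>P. c p * f p \<mu>) \<kappa> = (\<Sum>p\<in>P. c p * Ihat Q K \<epsilon> lam (f p) \<kappa>)"
proof -
  let ?P = "\<lambda>d. \<Prod>i\<in>UNIV. poch_int (Deig Q \<epsilon> i (\<kappa> + scaled_vec lam d) / lam) (- dQ Q d i)"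
  have "Ihat Q K \<epsilon> lam (\<lambda>\<mu>. \<Sum>p\<in>P. c p * f p \<mu>) \<kappa>
      = (\<Sum>\<^sub>\<infinity>d\<in>Lambda K. \<Sum>p\<in>P. c p * (?P d * f p (\<kappa> + scaled_vec lam d)))"
    unfolding Ihat_apply by (simp add: sum_distrib_left mult.left_commute)
  also have "\<dots> = (\<Sum>p\<in>P. \<Sum>\<^sub>\<infinity>d\<in>Lambda K. c p * (?P d * f p (\<kappa> + scaled_vec lam d)))"
    using assms by (intro infsum_sum summable_on_cmult_right)
  also have "\<dots> = (\<Sum>p\<in>P. c p * Ihat Q K \<epsilon> lam (f p) \<kappa>)"
    unfolding Ihat_apply by (simp add: infsum_cmult_right')
  finally show ?thesis .
qed

lemma fexp_scaled_vec_eq_0: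
  assumes "lam \<noteq> 0" and "\<kappa>0 = \<kappa> + scaled_vec lam e" and "d \<noteq> e"
  shows "fexp \<kappa>0 (\<kappa> + scaled_vec lam d) = 0"
proof -
  have "\<kappa> + scaled_vec lam d \<noteq> \<kappa>0"
    using assms scaled_vec_inj by (metis add_left_cancel)
  then show ?thesis
    by (simp add: fexp_def)
qed

lemma Ihat_fexp_summable:
  assumes "lam \<noteq> 0"
  shows "(\<lambda>d. X d * fexp \<kappa>0 (\<kappa> + scaled_vec lam d)) summable_on A"
proof (cases "\<exists>e. \<kappa>0 = \<kappa> + scaled_vec lam e")
  case True
  then obtain e where on_lattice: "\<kappa>0 = \<kappa> + scaled_vec lam e" ..
  have "((\<lambda>d. X d * fexp \<kappa>0 (\<kappa> + scaled_vec lam d)) has_sum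
      (if e \<in> A then X e * fexp \<kappa>0 (\<kappa> + scaled_vec lam e) else 0)) A"
    by (intro has_sum_single_support) (simp add: fexp_scaled_vec_eq_0[OF assms on_lattice])
  then show ?thesis
    by (rule has_sum_imp_summable)
next
  case False
  then have "fexp \<kappa>0 (\<kappa> + scaled_vec lam d) = 0" for d
    unfolding fexp_def by metis
  then show ?thesis
    by (intro summable_on_0) simp
qed

lemma Ihat_fexp:
  assumes "lam \<noteq> 0"
  shows "Ihat Q K \<epsilon> lam (fexp \<kappa>0) (\<kappa>0 - scaled_vec lam e)
       = (if e \<in> Lambda K then \<Prod>i\<in>UNIV. poch_int (Deig Q \<epsilon> i \<kappa>0 / lam) (- dQ Q e i) else 0)"
proof -
  let ?P = "\<lambda>d. \<Prod>i\<in>UNIV. poch_int (Deig Q \<epsilon> i (\<kappa>0 - scaled_vec lam e + scaled_vec lam d) / lam) (- dQ Q d i)"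
  have on_lattice: "\<kappa>0 = (\<kappa>0 - scaled_vec lam e) + scaled_vec lam e"
    by simp
  have "((\<lambda>d. ?P d * fexp \<kappa>0 (\<kappa>0 - scaled_vec lam e + scaled_vec lam d)) has_sum
      (if e \<in> Lambda K then ?P e * fexp \<kappa>0 (\<kappa>0 - scaled_vec lam e + scaled_vec lam e) else 0)) (Lambda K)"
    by (intro has_sum_single_support) (simp add: fexp_scaled_vec_eq_0[OF assms on_lattice])
  then show ?thesis
    unfolding Ihat_apply by (simp add: infsumI fexp_def)
qed

lemma Ihat_fexp_off_lattice:
  assumes "\<And>e. \<kappa> \<noteq> \<kappa>0 - scaled_vec lam e"
  shows "Ihat Q K \<epsilon> lam (fexp \<kappa>0) \<kappa> = 0"
proof -
  have "\<kappa> + scaled_vec lam d \<noteq> \<kappa>0" for d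
    using assms[of d] by (metis add_diff_cancel_right')
  then have "fexp \<kappa>0 (\<kappa> + scaled_vec lam d) = 0" for d
    by (simp add: fexp_def)
  then show ?thesis
    by (simp add: Ihat_apply)
qed

lemma PF_apply:
  "PF Q \<epsilon> lam \<gamma> f \<kappa>
     = (\<Prod>i | 0 < dQ Q \<gamma> i. poch_int (Deig Q \<epsilon> i \<kappa> / lam) (dQ Q \<gamma> i)) * f \<kappa>
     - (\<Prod>i | dQ Q \<gamma> i \<le> 0. poch_int (Deig Q \<epsilon> i (\<kappa> + scaled_vec lam \<gamma>) / lam) (- dQ Q \<gamma> i))
         * f (\<kappa> + scaled_vec lam \<gamma>)"
  by (simp add: PF_def poch_prod_op_def expmul_apply)

lemma PF_sum:
  "PF Q \<epsilon> lam \<gamma> (\<lambda>\<mu>. \<Sum>p\<in>P. c p * f p \<mu>) \<kappa> = (\<Sum>p\<in>P. c p * PF Q \<epsilon> lam \<gamma> (f p) \<kappa>)"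
  by (simp add: PF_apply sum_distrib_left sum_subtractf right_diff_distrib mult.left_commute)

lemma prod_poch_int_outside_Lambda:
  assumes zero: "\<And>i. i \<in> J \<Longrightarrow> Deig Q \<epsilon> i \<kappa>0 = 0"
    and cone: "\<And>d. (\<And>i. i \<in> J \<Longrightarrow> 0 \<le> dQ Q d i) \<Longrightarrow> d \<in> Lambda K"
    and "d \<notin> Lambda K"
  shows "(\<Prod>i\<in>UNIV. poch_int (Deig Q \<epsilon> i \<kappa>0 / lam) (- dQ Q d i)) = 0"
proof -
  obtain j where "j \<in> J" "dQ Q d j < 0"
    using cone \<open>d \<notin> Lambda K\<close> by (meson not_le)
  then show ?thesis
    using zero by (intro prod_poch_int_eq_0[where j = j]) auto
qed

lemma PF_Ihat_fexp_on_lattice: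
  assumes lam: "lam \<noteq> 0"
    and zero: "\<And>i. i \<in> J \<Longrightarrow> Deig Q \<epsilon> i \<kappa>0 = 0"
    and no_pole: "\<And>i l. 0 < l \<Longrightarrow> Deig Q \<epsilon> i \<kappa>0 / lam \<noteq> of_nat l"
    and cone: "\<And>d. (\<And>i. i \<in> J \<Longrightarrow> 0 \<le> dQ Q d i) \<Longrightarrow> d \<in> Lambda K"
  shows "PF Q \<epsilon> lam \<gamma> (Ihat Q K \<epsilon> lam (fexp \<kappa>0)) (\<kappa>0 - scaled_vec lam e) = 0"
proof -
  define y where "y i = Deig Q \<epsilon> i \<kappa>0 / lam" for i
  define n where "n i = dQ Q e i" for i
  have shifted: "\<kappa>0 - scaled_vec lam e + scaled_vec lam \<gamma> = \<kappa>0 - scaled_vec lam (e - \<gamma>)"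
    by (simp add: scaled_vec_diff)
  have Deig_e: "Deig Q \<epsilon> i (\<kappa>0 - scaled_vec lam e) / lam = y i - of_int (n i)" for i
    using lam by (simp add: Deig_diff_scaled_vec y_def n_def diff_divide_distrib)
  have Deig_e_\<gamma>: "Deig Q \<epsilon> i (\<kappa>0 - scaled_vec lam (e - \<gamma>)) / lam = y i - of_int (n i - dQ Q \<gamma> i)" for i
    using lam by (simp add: Deig_diff_scaled_vec dQ_diff y_def n_def diff_divide_distrib)
  have Ihat_e: "Ihat Q K \<epsilon> lam (fexp \<kappa>0) (\<kappa>0 - scaled_vec lam e)
      = (if e \<in> Lambda K then \<Prod>i\<in>UNIV. poch_int (y i) (- n i) else 0)"
    using lam by (simp add: Ihat_fexp y_def n_def)
  have Ihat_e_\<gamma>: "Ihat Q K \<epsilon> lam (fexp \<kappa>0) (\<kappa>0 - scaled_vec lam (e - \<gamma>))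
      = (if e - \<gamma> \<in> Lambda K then \<Prod>i\<in>UNIV. poch_int (y i) (dQ Q \<gamma> i - n i) else 0)"
    using lam by (simp add: Ihat_fexp dQ_diff y_def n_def)
  define X where "X = (\<Prod>i | 0 < dQ Q \<gamma> i. poch_int (y i - of_int (n i)) (dQ Q \<gamma> i))
      * (\<Prod>i\<in>UNIV. poch_int (y i) (- n i))"
  have X_alt: "X = (\<Prod>i | dQ Q \<gamma> i \<le> 0. poch_int (y i - of_int (n i - dQ Q \<gamma> i)) (- dQ Q \<gamma> i))
      * (\<Prod>i\<in>UNIV. poch_int (y i) (dQ Q \<gamma> i - n i))"
    unfolding X_def using no_pole by (intro prod_poch_int_PF) (simp add: y_def)
  have lhs: "(\<Prod>i | 0 < dQ Q \<gamma> i. poch_int (y i - of_int (n i)) (dQ Q \<gamma> i))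
      * Ihat Q K \<epsilon> lam (fexp \<kappa>0) (\<kappa>0 - scaled_vec lam e) = (if e \<in> Lambda K then X else 0)"
    by (simp add: Ihat_e X_def)
  have rhs: "(\<Prod>i | dQ Q \<gamma> i \<le> 0. poch_int (y i - of_int (n i - dQ Q \<gamma> i)) (- dQ Q \<gamma> i))
      * Ihat Q K \<epsilon> lam (fexp \<kappa>0) (\<kappa>0 - scaled_vec lam (e - \<gamma>)) = (if e - \<gamma> \<in> Lambda K then X else 0)"
    by (simp add: Ihat_e_\<gamma> X_alt)
  have "X = 0" if "e \<notin> Lambda K"
    using prod_poch_int_outside_Lambda[OF zero cone that] by (simp add: X_def y_def n_def)
  moreover have "X = 0" if "e - \<gamma> \<notin> Lambda K"
    using prod_poch_int_outside_Lambda[OF zero cone that] by (simp add: X_alt y_def n_def dQ_diff)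
  ultimately show ?thesis
    unfolding PF_apply shifted Deig_e Deig_e_\<gamma> lhs rhs by simp
qed

lemma PF_Ihat_fexp:
  assumes lam: "lam \<noteq> 0"
    and zero: "\<And>i. i \<in> J \<Longrightarrow> Deig Q \<epsilon> i \<kappa>0 = 0"
    and no_pole: "\<And>i l. 0 < l \<Longrightarrow> Deig Q \<epsilon> i \<kappa>0 / lam \<noteq> of_nat l"
    and cone: "\<And>d. (\<And>i. i \<in> J \<Longrightarrow> 0 \<le> dQ Q d i) \<Longrightarrow> d \<in> Lambda K"
  shows "PF Q \<epsilon> lam \<gamma> (Ihat Q K \<epsilon> lam (fexp \<kappa>0)) \<kappa> = 0"
proof (cases "\<exists>e. \<kappa> = \<kappa>0 - scaled_vec lam e")
  case True
  then show ?thesis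
    using PF_Ihat_fexp_on_lattice[OF assms] by blast
next
  case False
  moreover have "\<kappa> + scaled_vec lam \<gamma> \<noteq> \<kappa>0 - scaled_vec lam e" for e
  proof
    assume "\<kappa> + scaled_vec lam \<gamma> = \<kappa>0 - scaled_vec lam e"
    then have "\<kappa> = \<kappa>0 - scaled_vec lam (e + \<gamma>)"
      by (simp add: scaled_vec_add algebra_simps)
    with False show False
      by blast
  qed
  ultimately show ?thesis
    by (simp add: PF_apply Ihat_fexp_off_lattice)
qed

lemma Deig_Hcoef_eq_0:
  fixes Q :: "int^'n^'r" and p :: "'n^'r"
  assumes "invertible (Qp Q p)"
  shows "Deig Q \<epsilon> (p$b) (- Hcoef Q \<epsilon> p) = 0"
proof -
  let ?M = "matrix_inv (Qp Q p)"
  have "?M ** Qp Q p = mat 1"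
    using assms unfolding invertible_def matrix_inv_def by (rule someI2_ex) auto
  then have "(\<Sum>a\<in>UNIV. ?M$b'$a * Q$a$(p$b)) = (if b' = b then 1 else 0)" for b'
    by (simp add: vec_eq_iff matrix_matrix_mult_def Qp_def mat_def)
  then have inv: "(\<Sum>a\<in>UNIV. of_int (?M$b'$a) * of_int (Q$a$(p$b))) = (if b' = b then 1 else 0 :: complex)" for b'
    by (metis (no_types, lifting) of_int_0 of_int_1 of_int_mult of_int_sum sum.cong)
  have "(\<Sum>a\<in>UNIV. of_int (Q$a$(p$b)) * Hcoef Q \<epsilon> p $ a)
      = (\<Sum>a\<in>UNIV. \<Sum>b'\<in>UNIV. \<epsilon>$(p$b') * (of_int (?M$b'$a) * of_int (Q$a$(p$b))))"
    by (simp add: Hcoef_def sum_distrib_left algebra_simps)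
  also have "\<dots> = (\<Sum>b'\<in>UNIV. \<epsilon>$(p$b') * (\<Sum>a\<in>UNIV. of_int (?M$b'$a) * of_int (Q$a$(p$b))))"
    by (subst sum.swap) (simp add: sum_distrib_left)
  also have "\<dots> = \<epsilon>$(p$b)"
    by (simp add: inv if_distrib cong: if_cong)
  finally show ?thesis
    by (simp add: Deig_def sum_negf)
qed

lemma in_Lambda_if_dQ_nonneg_on_JK:
  fixes Q :: "int^'n^'r" and p :: "'n^'r"
  assumes "p \<in> JK Q K" and "\<And>b. 0 \<le> dQ Q d (p$b)"
  shows "d \<in> Lambda K"
  unfolding Lambda_def
proof (intro CollectI ballI)
  fix t assume "t \<in> K"
  then obtain c :: "real^'r" where c: "\<And>b. 0 \<le> c$b" "t = (\<Sum>b\<in>UNIV. c$b *\<^sub>R col Q (p$b))"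
    using assms(1) by (auto simp: JK_def cone_p_def)
  have "(\<Sum>a\<in>UNIV. real_of_int (d$a) * t$a)
      = (\<Sum>a\<in>UNIV. \<Sum>b\<in>UNIV. c$b * (real_of_int (d$a) * real_of_int (Q$a$(p$b))))"
    by (simp add: c(2) col_def sum_distrib_left algebra_simps)
  also have "\<dots> = (\<Sum>b\<in>UNIV. c$b * real_of_int (dQ Q d (p$b)))"
    by (subst sum.swap) (simp add: dQ_def sum_distrib_left)
  also have "\<dots> \<ge> 0"
    using c(1) assms(2) by (intro sum_nonneg mult_nonneg_nonneg) auto
  finally show "(\<Sum>a\<in>UNIV. real_of_int (d$a) * t$a) \<ge> 0" .
qed

lemma PF_Ihat_fexp_JK:
  fixes Q :: "int^'n^'r" and p :: "'n^'r"
  assumes p: "p \<in> JK Q K" and "invertible (Qp Q p)" and "lam \<noteq> 0" and "generic_eps Q K \<epsilon> lam"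
  shows "PF Q \<epsilon> lam \<gamma> (Ihat Q K \<epsilon> lam (fexp (- Hcoef Q \<epsilon> p))) \<kappa> = 0"
proof (rule PF_Ihat_fexp[where J = "range (($) p)"])
  show zero: "Deig Q \<epsilon> i (- Hcoef Q \<epsilon> p) = 0" if "i \<in> range (($) p)" for i
    using that Deig_Hcoef_eq_0[OF assms(2)] by blast
  show "Deig Q \<epsilon> i (- Hcoef Q \<epsilon> p) / lam \<noteq> of_nat l" if "0 < l" for i l
  proof (cases "i \<in> range (($) p)")
    case True
    then show ?thesis
      using zero that by simp
  next
    case False
    then have "\<forall>b. p$b \<noteq> i"
      by auto
    then have "Deig Q \<epsilon> i (- Hcoef Q \<epsilon> p) / lam \<notin> \<int>"
      using p assms(4) by (simp add: generic_eps_def)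
    then show ?thesis
      by (metis Ints_of_nat)
  qed
  show "d \<in> Lambda K" if "\<And>i. i \<in> range (($) p) \<Longrightarrow> 0 \<le> dQ Q d i" for d
    using that p by (intro in_Lambda_if_dQ_nonneg_on_JK) auto
qed (rule assms(3))

theorem mainTheorem6:
  fixes Q :: "int^'n^'r" and K :: "(real^'r) set" and t :: "real^'r"
    and \<epsilon> :: "complex^'n" and lam :: complex
    and c :: "'n^'r \<Rightarrow> complex^'n \<Rightarrow> complex" and \<gamma> :: "int^'r"
  assumes "is_chamber Q K" and "t \<in> K"
    and "\<forall>p\<in>JK Q K. invertible (Qp Q p)"
    and "lam \<noteq> 0"
    and "generic_eps Q K \<epsilon> lam"
    and "\<gamma> \<in> Lambda K"
  shows "PF Q \<epsilon> lam \<gamma> (Ihat Q K \<epsilon> lam (F_alpha Q K \<epsilon> c)) = (\<lambda>\<kappa>. 0)"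
proof -
  have Ihat_F: "Ihat Q K \<epsilon> lam (F_alpha Q K \<epsilon> c)
      = (\<lambda>\<kappa>. \<Sum>p\<in>JK Q K. c p \<epsilon> * Ihat Q K \<epsilon> lam (fexp (- Hcoef Q \<epsilon> p)) \<kappa>)"
    unfolding F_alpha_def using assms(4) by (intro ext Ihat_sum Ihat_fexp_summable) auto
  show ?thesis
    unfolding Ihat_F using assms(3-5) by (simp add: fun_eq_iff PF_sum PF_Ihat_fexp_JK)
qed

end
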